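(* Let $\mathbf x=(x_n)_{n\ge0}$ be a sequence over a finite alphabet $\mathcal A$, let $\mathcal A'$ be a proper subset of $\mathcal A$, and suppose there is a sequence $\mathbf y=(y_n)_{n\ge 0}$ over $\mathcal A'$ such that every prefix of $\mathbf y$ is a factor of $\mathbf x$. Let $d\ge 2$. If no sequence in the orbit closure of $\mathbf y$ under the shift is $d$-automatic, then $\mathbf x$ is not $d$-automatic.
   Context: The shift $S$ maps $(z_n)_{n\ge0}$ to $(z_{n+1})_{n\ge 0}$; the orbit closure of $\mathbf y$ is the closure of $\{S^n\mathbf y:n\ge0\}$ in the product topology. A factor of $\mathbf x$ is a finite block $x_ix_{i+1}\cdots x_j$. For $d\ge 2$, a sequence is $d$-automatic if it is the letter-to-letter image of a fixed point of a morphism all of whose letter-images have length $d$. *)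

theory Defs
  imports "HOL-Analysis.Analysis"
begin

definition shift :: "(nat \<Rightarrow> 'a) \<Rightarrow> nat \<Rightarrow> 'a" where
  "shift z = (\<lambda>n. z (Suc n))"

definition orbit_closure :: "(nat \<Rightarrow> 'a) \<Rightarrow> (nat \<Rightarrow> 'a) set" where
  "orbit_closure y =
     (product_topology (\<lambda>_::nat. discrete_topology (UNIV::'a set)) UNIV)
       closure_of {(shift ^^ n) y | n. True}"

definition prefixes_are_factors :: "(nat \<Rightarrow> 'a) \<Rightarrow> (nat \<Rightarrow> 'a) \<Rightarrow> bool" where
  "prefixes_are_factors y x \<longleftrightarrow> (\<forall>m. \<exists>i. \<forall>k<m. x (i + k) = y k)"

text \<open>d-automatic: letter-to-letter image (coding tau) of a fixed point u of a d-uniform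
  morphism sigma on a finite alphabet B (represented inside nat).  The fixed point equation
  sigma(u) = u for a d-uniform morphism is u(d*n+j) = (sigma (u n))!j for j<d.\<close>
definition d_automatic :: "nat \<Rightarrow> (nat \<Rightarrow> 'a) \<Rightarrow> bool" where
  "d_automatic d x \<longleftrightarrow>
     (\<exists>(B::nat set) (\<sigma>::nat \<Rightarrow> nat list) (\<tau>::nat \<Rightarrow> 'a) (u::nat \<Rightarrow> nat).
        finite B \<and>
        (\<forall>b\<in>B. length (\<sigma> b) = d \<and> set (\<sigma> b) \<subseteq> B) \<and>
        (\<forall>n. u n \<in> B) \<and>
        (\<forall>n j. j < d \<longrightarrow> u (d * n + j) = \<sigma> (u n) ! j) \<and>
        (\<forall>n. x n = \<tau> (u n)))"

end

theory Submission
  imports Defs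
begin

text \<open>If \<open>x = \<tau>(u)\<close> with \<open>u\<close> a fixed point of a \<open>d\<close>-uniform morphism \<open>\<sigma>\<close>, then every long
  prefix of \<open>y\<close>, being a factor of \<open>x\<close>, contains a whole block \<open>\<tau>(\<sigma>\<^sup>k(b))\<close>. Choose \<open>p > 0\<close>
  such that the \<open>p\<close>-th iterate of the first-letter map \<open>b \<mapsto> \<sigma>(b)\<^sub>0\<close> is idempotent. Then the
  blocks \<open>\<tau>(\<sigma>\<^sup>p\<^sup>K(c))\<close> occur in \<open>y\<close> for a single letter \<open>c\<close> fixed by that iterate and infinitely
  many \<open>K\<close> (pigeonhole). They are prefixes of \<open>\<tau>(w)\<close>, where \<open>w\<close> is the fixed point of \<open>\<sigma>\<^sup>p\<close>
  beginning with \<open>c\<close>, so \<open>\<tau>(w)\<close> lies in the orbit closure of \<open>y\<close>. Finally \<open>\<sigma>\<close> permutes the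
  fixed points of \<open>\<sigma>\<^sup>p\<close> beginning with \<open>c, \<sigma>(c)\<^sub>0, \<dots>\<close> cyclically, and the sequence of their
  letter tuples is a fixed point of a \<open>d\<close>-uniform morphism, so \<open>\<tau>(w)\<close> is \<open>d\<close>-automatic.\<close>

subsection \<open>Letters of iterated uniform morphisms\<close>

text \<open>\<open>morph_pow_nth \<sigma> d k b r\<close> is the letter at position \<open>r < d^k\<close> of \<open>\<sigma>\<^sup>k(b)\<close> for a
  \<open>d\<close>-uniform morphism \<open>\<sigma>\<close>, read off the base-\<open>d\<close> digits of \<open>r\<close>.\<close>

fun morph_pow_nth :: "('b \<Rightarrow> 'b list) \<Rightarrow> nat \<Rightarrow> nat \<Rightarrow> 'b \<Rightarrow> nat \<Rightarrow> 'b" where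
  "morph_pow_nth \<sigma> d 0 b r = b"
| "morph_pow_nth \<sigma> d (Suc k) b r = \<sigma> (morph_pow_nth \<sigma> d k b (r div d)) ! (r mod d)"

definition first_letter :: "('b \<Rightarrow> 'b list) \<Rightarrow> 'b \<Rightarrow> 'b" where
  "first_letter \<sigma> b = \<sigma> b ! 0"

lemma morph_pow_nth_add:
  assumes "0 < d"
  shows "morph_pow_nth \<sigma> d (k + m) b r =
    morph_pow_nth \<sigma> d k (morph_pow_nth \<sigma> d m b (r div d ^ k)) (r mod d ^ k)"
proof (induction k arbitrary: r)
  case (Suc k)
  have "r div d div d ^ k = r div d ^ Suc k"
    by (simp add: div_mult2_eq mult.commute)
  moreover have "r div d mod d ^ k = r mod d ^ Suc k div d"
    using assms by (simp add: mod_mult2_eq div_mult2_eq mult.commute)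
  moreover have "r mod d ^ Suc k mod d = r mod d"
    by (simp add: mod_mod_cancel)
  ultimately show ?case using Suc by simp
qed simp

lemma morph_pow_nth_zero_index: "morph_pow_nth \<sigma> d m b 0 = (first_letter \<sigma> ^^ m) b"
  by (induction m) (simp_all add: first_letter_def)

lemma morph_pow_nth_add_prefix:
  assumes "0 < d" "r < d ^ k"
  shows "morph_pow_nth \<sigma> d (k + m) b r = morph_pow_nth \<sigma> d k ((first_letter \<sigma> ^^ m) b) r"
  using morph_pow_nth_add[OF assms(1), of \<sigma> k m b r] assms(2)
  by (simp add: morph_pow_nth_zero_index)

lemma morph_pow_nth_mem:
  assumes "\<forall>b\<in>B. length (\<sigma> b) = d \<and> set (\<sigma> b) \<subseteq> B" "0 < d" "b \<in> B"
  shows "morph_pow_nth \<sigma> d k b r \<in> B"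
proof (induction k arbitrary: r)
  case (Suc k)
  then show ?case using assms by (auto intro!: subsetD[OF _ nth_mem])
qed (use assms in simp)

lemma funpow_first_letter_mem:
  assumes "\<forall>b\<in>B. length (\<sigma> b) = d \<and> set (\<sigma> b) \<subseteq> B" "0 < d" "b \<in> B"
  shows "(first_letter \<sigma> ^^ m) b \<in> B"
  using morph_pow_nth_mem[OF assms, of m 0] by (simp add: morph_pow_nth_zero_index)

lemma fixpoint_morph_pow_nth:
  assumes "\<forall>n j. j < d \<longrightarrow> u (d * n + j) = \<sigma> (u n) ! j" "0 < d" "r < d ^ k"
  shows "u (d ^ k * n + r) = morph_pow_nth \<sigma> d k (u n) r"
  using assms(3)
proof (induction k arbitrary: r)
  case (Suc k)
  have "r div d < d ^ k"
    using Suc.prems assms(2) by (simp add: div_less_iff_less_mult mult.commute)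
  moreover have "d ^ Suc k * n + r = d * (d ^ k * n + r div d) + r mod d"
    by (simp add: algebra_simps)
  ultimately show ?case using assms Suc.IH by simp
qed simp

lemma le_mult_if_pos: "0 < k \<Longrightarrow> (m::nat) \<le> k * m"
  using mult_le_cancel2[of 1 m k] by simp

lemma less_power_if_le: "2 \<le> d \<Longrightarrow> n \<le> k \<Longrightarrow> n < (d::nat) ^ k"
  using less_exp[of k] power_mono[of 2 d k] by linarith

lemma funpow_mult_fixpoint: "(f ^^ p) b = b \<Longrightarrow> (f ^^ (p * t)) b = b"
  by (induction t) (simp_all add: funpow_add)

lemma morph_pow_nth_periodic:
  assumes "(first_letter \<sigma> ^^ p) b = b" "0 < d" "r < d ^ (p * K)" "r < d ^ (p * K')"
  shows "morph_pow_nth \<sigma> d (p * K) b r = morph_pow_nth \<sigma> d (p * K') b r"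
proof -
  have *: "morph_pow_nth \<sigma> d (p * K) b r = morph_pow_nth \<sigma> d (p * K') b r"
    if le: "K \<le> K'" and bound: "r < d ^ (p * K)" for K K'
  proof -
    obtain t where "K' = K + t"
      using le_Suc_ex[OF le] ..
    then have "morph_pow_nth \<sigma> d (p * K') b r = morph_pow_nth \<sigma> d (p * K + p * t) b r"
      by (simp add: distrib_left)
    also have "\<dots> = morph_pow_nth \<sigma> d (p * K) ((first_letter \<sigma> ^^ (p * t)) b) r"
      by (rule morph_pow_nth_add_prefix[OF assms(2) bound])
    finally show ?thesis
      using funpow_mult_fixpoint[OF assms(1), of t] by simp
  qed
  show ?thesis
  proof (cases "K \<le> K'")
    case True
    then show ?thesis using *[of K K'] assms(3) by blast
  next
    case False
    then show ?thesis using *[of K' K] assms(4) by simp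
  qed
qed

text \<open>When \<open>first_letter \<sigma> ^^ p\<close> fixes \<open>b\<close>, this is the fixed point of \<open>\<sigma>\<^sup>p\<close> that begins
  with \<open>b\<close>; the length \<open>p * (s + 1)\<close> is merely one that is large enough for position \<open>s\<close>.\<close>

definition morph_limit :: "('b \<Rightarrow> 'b list) \<Rightarrow> nat \<Rightarrow> nat \<Rightarrow> 'b \<Rightarrow> nat \<Rightarrow> 'b" where
  "morph_limit \<sigma> d p b s = morph_pow_nth \<sigma> d (p * (s + 1)) b s"

lemma morph_pow_nth_eq_morph_limit:
  assumes "(first_letter \<sigma> ^^ p) b = b" "2 \<le> d" "0 < p" "r < d ^ (p * K)"
  shows "morph_pow_nth \<sigma> d (p * K) b r = morph_limit \<sigma> d p b r"
proof -
  have "r \<le> p * (r + 1)"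
    using le_mult_if_pos[OF assms(3), of "r + 1"] by simp
  then have "r < d ^ (p * (r + 1))"
    using less_power_if_le[OF assms(2)] by blast
  moreover have "0 < d"
    using assms(2) by simp
  ultimately show ?thesis
    unfolding morph_limit_def by (intro morph_pow_nth_periodic[OF assms(1) _ assms(4)])
qed

lemma morph_limit_step:
  assumes "(first_letter \<sigma> ^^ p) b = b" "2 \<le> d" "0 < p" "j < d"
  shows "morph_limit \<sigma> d p (first_letter \<sigma> b) (d * n + j) = \<sigma> (morph_limit \<sigma> d p b n) ! j"
proof -
  have "d * n + j < d * Suc n"
    using assms(4) by simp
  also have "\<dots> \<le> d * d ^ n"
    using less_power_if_le[OF assms(2), of n n] by (intro mult_le_mono2) simp
  also have "\<dots> = d ^ Suc n" by simp
  also have "\<dots> \<le> d ^ (p * (n + 1))"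
    using assms(2) le_mult_if_pos[OF assms(3), of "Suc n"] by (intro power_increasing) auto
  finally have bound: "d * n + j < d ^ (p * (n + 1))" .
  have periodic: "(first_letter \<sigma> ^^ p) (first_letter \<sigma> b) = first_letter \<sigma> b"
    using assms(1) by (metis funpow_swap1)
  have "\<sigma> (morph_limit \<sigma> d p b n) ! j = morph_pow_nth \<sigma> d (p * (n + 1) + 1) b (d * n + j)"
    unfolding morph_limit_def using assms(4) by simp
  also have "\<dots> = morph_pow_nth \<sigma> d (p * (n + 1)) (first_letter \<sigma> b) (d * n + j)"
    using morph_pow_nth_add_prefix[OF _ bound, of \<sigma> 1 b] assms(2)
    by (simp del: morph_pow_nth.simps)
  also have "\<dots> = morph_limit \<sigma> d p (first_letter \<sigma> b) (d * n + j)"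
    by (rule morph_pow_nth_eq_morph_limit[OF periodic assms(2,3) bound])
  finally show ?thesis by (rule sym)
qed

subsection \<open>Automatic sequences from cycles of fixed points\<close>

lemma d_automaticI:
  fixes U :: "nat \<Rightarrow> 'b::countable" and \<sigma> :: "'b \<Rightarrow> 'b list"
  assumes "finite C" and "\<forall>c\<in>C. length (\<sigma> c) = d \<and> set (\<sigma> c) \<subseteq> C" and "\<forall>n. U n \<in> C"
    and "\<forall>n j. j < d \<longrightarrow> U (d * n + j) = \<sigma> (U n) ! j" and "\<forall>n. x n = \<tau> (U n)"
  shows "d_automatic d x"
proof -
  let ?\<sigma> = "\<lambda>m. map to_nat (\<sigma> (from_nat m))"
  have "finite (to_nat ` C)"
    using assms(1) by simp
  moreover have "\<forall>m\<in>to_nat ` C. length (?\<sigma> m) = d \<and> set (?\<sigma> m) \<subseteq> to_nat ` C"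
    using assms(2) by auto
  moreover have "\<forall>n. to_nat (U n) \<in> to_nat ` C"
    using assms(3) by simp
  moreover have "\<forall>n j. j < d \<longrightarrow> to_nat (U (d * n + j)) = ?\<sigma> (to_nat (U n)) ! j"
    using assms(2-4) by simp
  moreover have "\<forall>n. x n = (\<tau> \<circ> from_nat) (to_nat (U n))"
    using assms(5) by simp
  ultimately show ?thesis
    unfolding d_automatic_def
    by (intro exI[of _ "to_nat ` C"] exI[of _ ?\<sigma>] exI[of _ "\<tau> \<circ> from_nat"]
        exI[of _ "\<lambda>n. to_nat (U n)"]) blast
qed

lemma periodic_fun_mod:
  fixes f :: "nat \<Rightarrow> 'b"
  assumes "\<And>i. f (i + p) = f i"
  shows "f i = f (i mod p)"
proof -
  have "f (k + p * t) = f k" for k t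
  proof (induction t)
    case (Suc t)
    have "k + p * Suc t = (k + p * t) + p" by simp
    then show ?case using Suc assms by metis
  qed simp
  then show ?thesis
    by (metis mod_mult_div_eq add.commute)
qed

text \<open>A family \<open>W 0, \<dots>, W (p - 1)\<close> permuted cyclically by \<open>\<sigma>\<close> is coded by the sequence of
  \<open>p\<close>-tuples of its letters; on tuples \<open>\<sigma>\<close> acts letterwise after a cyclic rotation.\<close>

lemma d_automatic_cyclic_family:
  fixes W :: "nat \<Rightarrow> nat \<Rightarrow> 'b::countable"
  assumes finB: "finite B" and \<sigma>B: "\<forall>b\<in>B. length (\<sigma> b) = d \<and> set (\<sigma> b) \<subseteq> B"
    and "0 < p" and WB: "\<And>i n. W i n \<in> B" and periodic: "\<And>i. W (i + p) = W i"
    and step: "\<And>i n j. j < d \<Longrightarrow> W (Suc i) (d * n + j) = \<sigma> (W i n) ! j"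
  shows "d_automatic d (\<lambda>n. \<tau> (W 0 n))"
proof (rule d_automaticI[where \<tau> = "\<lambda>L. \<tau> (L ! 0)"])
  let ?U = "\<lambda>n. map (\<lambda>i. W i n) [0..<p]"
  let ?\<sigma> = "\<lambda>L. map (\<lambda>j. map (\<lambda>b. \<sigma> b ! j) (rotate (p - 1) L)) [0..<d]"
  let ?C = "{L. set L \<subseteq> B \<and> length L = p}"
  show "finite ?C"
    using finite_lists_length_eq[OF finB] by simp
  show "\<forall>L\<in>?C. length (?\<sigma> L) = d \<and> set (?\<sigma> L) \<subseteq> ?C"
    using \<sigma>B by (fastforce intro: subsetD[OF _ nth_mem])
  show "\<forall>n. ?U n \<in> ?C"
    using WB by auto
  show "\<forall>n. \<tau> (W 0 n) = \<tau> (?U n ! 0)"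
    using \<open>0 < p\<close> by simp
  show "\<forall>n j. j < d \<longrightarrow> ?U (d * n + j) = ?\<sigma> (?U n) ! j"
  proof (intro allI impI nth_equalityI)
    fix n j i
    assume j: "j < d" and "i < length (?U (d * n + j))"
    then have i: "i < p" by simp
    let ?m = "(p - 1 + i) mod p"
    have "Suc ?m mod p = i"
      using i by (simp add: mod_Suc_eq)
    then have "W i = W (Suc ?m)"
      using periodic_fun_mod[of W p, OF periodic] by metis
    then show "?U (d * n + j) ! i = ?\<sigma> (?U n) ! j ! i"
      using i j \<open>0 < p\<close> by (simp add: nth_rotate step)
  qed simp
qed

lemma d_automatic_morph_limit:
  fixes \<sigma> :: "'b::countable \<Rightarrow> 'b list"
  assumes finB: "finite B" and \<sigma>B: "\<forall>b\<in>B. length (\<sigma> b) = d \<and> set (\<sigma> b) \<subseteq> B"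
    and "c \<in> B" and periodic: "(first_letter \<sigma> ^^ p) c = c" and "2 \<le> d" "0 < p"
  shows "d_automatic d (\<lambda>s. \<tau> (morph_limit \<sigma> d p c s))"
proof -
  define W where "W i = morph_limit \<sigma> d p ((first_letter \<sigma> ^^ i) c)" for i
  have "0 < d" using \<open>2 \<le> d\<close> by simp
  have periodic_i: "(first_letter \<sigma> ^^ p) ((first_letter \<sigma> ^^ i) c) = (first_letter \<sigma> ^^ i) c" for i
    using periodic by (metis funpow_add add.commute comp_apply)
  have "d_automatic d (\<lambda>n. \<tau> (W 0 n))"
  proof (rule d_automatic_cyclic_family[OF finB \<sigma>B \<open>0 < p\<close>])
    show "W i n \<in> B" for i n
      unfolding W_def morph_limit_def
      using morph_pow_nth_mem[OF \<sigma>B \<open>0 < d\<close> funpow_first_letter_mem[OF \<sigma>B \<open>0 < d\<close> \<open>c \<in> B\<close>]] .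
    show "W (i + p) = W i" for i
      unfolding W_def using periodic by (simp add: funpow_add)
    show "W (Suc i) (d * n + j) = \<sigma> (W i n) ! j" if "j < d" for i n j
      unfolding W_def using morph_limit_step[OF periodic_i \<open>2 \<le> d\<close> \<open>0 < p\<close> that] by simp
  qed
  then show ?thesis
    by (simp add: W_def)
qed

subsection \<open>Factors and the orbit closure\<close>

definition prefix_is_factor :: "nat \<Rightarrow> (nat \<Rightarrow> 'a) \<Rightarrow> (nat \<Rightarrow> 'a) \<Rightarrow> bool" where
  "prefix_is_factor m w y \<longleftrightarrow> (\<exists>i. \<forall>k<m. y (i + k) = w k)"

lemma prefixes_are_factors_iff: "prefixes_are_factors w y \<longleftrightarrow> (\<forall>m. prefix_is_factor m w y)"
  by (simp add: prefixes_are_factors_def prefix_is_factor_def)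

lemma prefix_is_factor_mono:
  assumes "prefix_is_factor m' w' y" "m \<le> m'" "\<And>k. k < m \<Longrightarrow> w k = w' k"
  shows "prefix_is_factor m w y"
  using assms unfolding prefix_is_factor_def by (metis order_less_le_trans)

lemma funpow_shift_apply: "(shift ^^ n) y s = y (n + s)"
  by (induction n arbitrary: s) (auto simp: shift_def)

lemma orbit_closureI:
  assumes "prefixes_are_factors z y"
  shows "z \<in> orbit_closure y"
  unfolding orbit_closure_def in_closure_of
proof (intro conjI allI impI)
  show "z \<in> topspace (product_topology (\<lambda>_. discrete_topology UNIV) UNIV)"
    by simp
  fix T
  assume T: "z \<in> T \<and> openin (product_topology (\<lambda>_::nat. discrete_topology (UNIV::'a set)) UNIV) T"
  then obtain U where U: "finite {i. U i \<noteq> UNIV}" "z \<in> Pi\<^sub>E UNIV U" "Pi\<^sub>E UNIV U \<subseteq> T"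
    unfolding openin_product_topology_alt by force
  obtain m where m: "{i. U i \<noteq> UNIV} \<subseteq> {..<m}"
    using finite_nat_bounded[OF U(1)] by blast
  obtain e where e: "\<forall>s<m. y (e + s) = z s"
    using assms unfolding prefixes_are_factors_def by blast
  have "(shift ^^ e) y i \<in> U i" for i
  proof (cases "U i = UNIV")
    case False
    then have "y (e + i) = z i" using m e by auto
    then show ?thesis using U(2) by (auto simp: PiE_UNIV_domain funpow_shift_apply)
  qed simp
  then have "(shift ^^ e) y \<in> Pi\<^sub>E UNIV U"
    by (simp add: PiE_UNIV_domain)
  then show "\<exists>y'. y' \<in> {(shift ^^ n) y |n. True} \<and> y' \<in> T"
    using U(3) by blast
qed

lemma prefixes_are_factors_morph_limit:
  assumes "(first_letter \<sigma> ^^ p) c = c" "2 \<le> d" "0 < p"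
    and "\<exists>\<^sub>F K in sequentially.
      prefix_is_factor (d ^ (p * K)) (\<lambda>s. \<tau> (morph_pow_nth \<sigma> d (p * K) c s)) y"
  shows "prefixes_are_factors (\<lambda>s. \<tau> (morph_limit \<sigma> d p c s)) y"
  unfolding prefixes_are_factors_iff
proof
  fix m
  obtain K where "m \<le> K"
    and K: "prefix_is_factor (d ^ (p * K)) (\<lambda>s. \<tau> (morph_pow_nth \<sigma> d (p * K) c s)) y"
    using assms(4) unfolding frequently_sequentially by blast
  then have "m \<le> p * K"
    using le_mult_if_pos[OF assms(3), of K] by linarith
  then have "m < d ^ (p * K)"
    using less_power_if_le[OF assms(2)] by blast
  then show "prefix_is_factor m (\<lambda>s. \<tau> (morph_limit \<sigma> d p c s)) y"
    using morph_pow_nth_eq_morph_limit[OF assms(1-3)]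
    by (intro prefix_is_factor_mono[OF K]) auto
qed

text \<open>A prefix of \<open>y\<close> of length \<open>2 d\<^sup>k\<close> occurs in \<open>x\<close>, so it contains an aligned block
  \<open>\<sigma>\<^sup>k(u n)\<close> of the fixed point.\<close>

lemma fixpoint_blocks_are_factors:
  assumes "prefixes_are_factors y x" "\<forall>n. x n = \<tau> (u n)" "0 < d"
    and "\<forall>n j. j < d \<longrightarrow> u (d * n + j) = \<sigma> (u n) ! j"
  obtains n where "prefix_is_factor (d ^ k) (\<lambda>s. \<tau> (morph_pow_nth \<sigma> d k (u n) s)) y"
proof -
  define D where "D = d ^ k"
  have "0 < D" unfolding D_def using assms(3) by simp
  obtain i where i: "\<forall>t<2 * D. x (i + t) = y t"
    using assms(1) unfolding prefixes_are_factors_def by metis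
  have "y (D - i mod D + s) = \<tau> (morph_pow_nth \<sigma> d k (u (i div D + 1)) s)" if "s < D" for s
  proof -
    have "i mod D < D" using \<open>0 < D\<close> by simp
    then have "y (D - i mod D + s) = x (i + (D - i mod D + s))"
      using i that by simp
    also have "i + (D - i mod D + s) = D * (i div D + 1) + s"
    proof -
      have "i = D * (i div D) + i mod D" and "D * (i div D + 1) = D * (i div D) + D"
        by simp_all
      then show ?thesis using \<open>i mod D < D\<close> by linarith
    qed
    also have "x (D * (i div D + 1) + s) = \<tau> (u (D * (i div D + 1) + s))"
      using assms(2) by blast
    also have "u (D * (i div D + 1) + s) = morph_pow_nth \<sigma> d k (u (i div D + 1)) s"
      unfolding D_def using assms(4,3) that[unfolded D_def] by (rule fixpoint_morph_pow_nth)
    finally show ?thesis .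
  qed
  then show ?thesis
    using that unfolding prefix_is_factor_def D_def by blast
qed

lemma fixpoint_blocks_are_factors_funpow_first_letter:
  assumes "prefixes_are_factors y x" "\<forall>n. x n = \<tau> (u n)" "0 < d"
    and "\<forall>n j. j < d \<longrightarrow> u (d * n + j) = \<sigma> (u n) ! j"
  obtains n where
    "prefix_is_factor (d ^ k) (\<lambda>s. \<tau> (morph_pow_nth \<sigma> d k ((first_letter \<sigma> ^^ m) (u n)) s)) y"
proof -
  obtain n where n: "prefix_is_factor (d ^ (k + m))
      (\<lambda>s. \<tau> (morph_pow_nth \<sigma> d (k + m) (u n) s)) y"
    using fixpoint_blocks_are_factors[OF assms] by blast
  have "prefix_is_factor (d ^ k)
      (\<lambda>s. \<tau> (morph_pow_nth \<sigma> d k ((first_letter \<sigma> ^^ m) (u n)) s)) y"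
  proof (rule prefix_is_factor_mono[OF n])
    show "d ^ k \<le> d ^ (k + m)"
      using \<open>0 < d\<close> by (intro power_increasing) auto
    show "\<tau> (morph_pow_nth \<sigma> d k ((first_letter \<sigma> ^^ m) (u n)) s) =
        \<tau> (morph_pow_nth \<sigma> d (k + m) (u n) s)" if "s < d ^ k" for s
      by (simp only: morph_pow_nth_add_prefix[OF \<open>0 < d\<close> that])
  qed
  then show ?thesis using that by blast
qed

subsection \<open>Pigeonhole arguments\<close>

lemma funpow_eventually_periodic:
  fixes f :: "'a \<Rightarrow> 'a"
  assumes "(f ^^ i) b = (f ^^ j) b" "i \<le> j" "i \<le> s"
  shows "(f ^^ (s + (j - i) * q)) b = (f ^^ s) b"
proof (induction q)
  case (Suc q)
  define s' where "s' = s + (j - i) * q"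
  have "s + (j - i) * Suc q = (s' - i) + j" and "s' = (s' - i) + i"
    using assms(2,3) by (simp_all add: s'_def)
  then have "(f ^^ (s + (j - i) * Suc q)) b = (f ^^ (s' - i)) ((f ^^ j) b)"
    by (simp only: funpow_add comp_apply)
  also have "\<dots> = (f ^^ ((s' - i) + i)) b"
    using assms(1) by (simp only: funpow_add comp_apply)
  also have "\<dots> = (f ^^ s') b"
    using \<open>s' = (s' - i) + i\<close> by simp
  finally have "(f ^^ (s + (j - i) * Suc q)) b = (f ^^ s') b" .
  then show ?case using Suc by (simp add: s'_def)
qed simp

lemma funpow_idempotent_on_finite:
  assumes "finite B" "f ` B \<subseteq> B"
  obtains n where "0 < n" "\<forall>b\<in>B. (f ^^ n) ((f ^^ n) b) = (f ^^ n) b"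
proof -
  have "(f ^^ i) b \<in> B" if "b \<in> B" for i b
    using that assms(2) by (induction i) auto
  then have "range (\<lambda>i. restrict (f ^^ i) B) \<subseteq> B \<rightarrow>\<^sub>E B"
    by auto
  then have "finite (range (\<lambda>i. restrict (f ^^ i) B))"
    using finite_PiE[OF assms(1), of "\<lambda>_. B"] assms(1) finite_subset by blast
  then have "\<not> inj (\<lambda>i. restrict (f ^^ i) B)"
    using range_inj_infinite by blast
  then obtain i j where "i < j" "restrict (f ^^ i) B = restrict (f ^^ j) B"
    unfolding inj_def by (metis linorder_neqE_nat)
  then have ij: "(f ^^ i) b = (f ^^ j) b" if "b \<in> B" for b
    using that by (metis restrict_apply')
  define n where "n = Suc i * (j - i)"
  have "0 < n" and "i \<le> n"
    using \<open>i < j\<close> le_mult_if_pos[of "j - i" "Suc i"] by (simp_all add: n_def mult.commute)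
  moreover have "(f ^^ n) ((f ^^ n) b) = (f ^^ n) b" if "b \<in> B" for b
    using funpow_eventually_periodic[OF ij[OF that] less_imp_le[OF \<open>i < j\<close>] \<open>i \<le> n\<close>, of "Suc i"]
    by (simp add: n_def mult.commute funpow_add)
  ultimately show ?thesis using that by blast
qed

lemma bex_frequently_sequentially_finite:
  assumes "finite F" "\<And>K. \<exists>c\<in>F. P K c"
  shows "\<exists>c\<in>F. \<exists>\<^sub>F K in sequentially. P K c"
proof (rule frequently_bex_finite[OF assms(1)])
  show "\<exists>\<^sub>F K in sequentially. \<exists>c\<in>F. P K c"
    unfolding frequently_sequentially using assms(2) by blast
qed

lemma periodic_blocks_frequently_factors:
  assumes finB: "finite B" and \<sigma>B: "\<forall>b\<in>B. length (\<sigma> b) = d \<and> set (\<sigma> b) \<subseteq> B"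
    and uB: "\<forall>n. u n \<in> B" and "prefixes_are_factors y x" and x_eq: "\<forall>n. x n = \<tau> (u n)"
    and "0 < d" and fixpoint: "\<forall>n j. j < d \<longrightarrow> u (d * n + j) = \<sigma> (u n) ! j"
  obtains p c where "0 < p" "c \<in> B" "(first_letter \<sigma> ^^ p) c = c"
    "\<exists>\<^sub>F K in sequentially.
      prefix_is_factor (d ^ (p * K)) (\<lambda>s. \<tau> (morph_pow_nth \<sigma> d (p * K) c s)) y"
proof -
  have "first_letter \<sigma> ` B \<subseteq> B"
    using funpow_first_letter_mem[OF \<sigma>B \<open>0 < d\<close>, of _ 1] by auto
  then obtain p where "0 < p"
    and idem: "\<forall>b\<in>B. (first_letter \<sigma> ^^ p) ((first_letter \<sigma> ^^ p) b) = (first_letter \<sigma> ^^ p) b"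
    using funpow_idempotent_on_finite[OF finB] by blast
  let ?block = "\<lambda>K c. prefix_is_factor (d ^ (p * K)) (\<lambda>s. \<tau> (morph_pow_nth \<sigma> d (p * K) c s)) y"
  let ?periodic = "{c\<in>B. (first_letter \<sigma> ^^ p) c = c}"
  have "\<exists>c\<in>?periodic. ?block K c" for K
  proof -
    obtain n where "?block K ((first_letter \<sigma> ^^ p) (u n))"
      by (rule fixpoint_blocks_are_factors_funpow_first_letter[OF assms(4) x_eq \<open>0 < d\<close> fixpoint])
    moreover have "(first_letter \<sigma> ^^ p) (u n) \<in> ?periodic"
      using idem uB funpow_first_letter_mem[OF \<sigma>B \<open>0 < d\<close>] by simp
    ultimately show ?thesis by blast
  qed
  then have "\<exists>c\<in>?periodic. \<exists>\<^sub>F K in sequentially. ?block K c"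
    using finB by (intro bex_frequently_sequentially_finite) simp_all
  then obtain c where "c \<in> B" "(first_letter \<sigma> ^^ p) c = c"
    and "\<exists>\<^sub>F K in sequentially. ?block K c"
    by blast
  then show ?thesis
    using that \<open>0 < p\<close> by blast
qed

theorem mainTheorem13:
  fixes x y :: "nat \<Rightarrow> 'a" and A A' :: "'a set" and d :: nat
  assumes "finite A"
    and "\<forall>n. x n \<in> A"
    and "A' \<subset> A"
    and "\<forall>n. y n \<in> A'"
    and "prefixes_are_factors y x"
    and "d \<ge> 2"
    and "\<forall>z\<in>orbit_closure y. \<not> d_automatic d z"
  shows "\<not> d_automatic d x"
proof
  assume "d_automatic d x"
  then obtain B :: "nat set" and \<sigma> :: "nat \<Rightarrow> nat list" and \<tau> :: "nat \<Rightarrow> 'a" and u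
    where finB: "finite B" and \<sigma>B: "\<forall>b\<in>B. length (\<sigma> b) = d \<and> set (\<sigma> b) \<subseteq> B"
      and uB: "\<forall>n. u n \<in> B" and fixpoint: "\<forall>n j. j < d \<longrightarrow> u (d * n + j) = \<sigma> (u n) ! j"
      and x_eq: "\<forall>n. x n = \<tau> (u n)"
    unfolding d_automatic_def by blast
  have "0 < d" using \<open>d \<ge> 2\<close> by simp
  obtain p c where "0 < p" "c \<in> B" and periodic: "(first_letter \<sigma> ^^ p) c = c"
    and "\<exists>\<^sub>F K in sequentially.
      prefix_is_factor (d ^ (p * K)) (\<lambda>s. \<tau> (morph_pow_nth \<sigma> d (p * K) c s)) y"
    using periodic_blocks_frequently_factors[OF finB \<sigma>B uB assms(5) x_eq \<open>0 < d\<close> fixpoint] .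
  then have "(\<lambda>s. \<tau> (morph_limit \<sigma> d p c s)) \<in> orbit_closure y"
    by (intro orbit_closureI prefixes_are_factors_morph_limit[OF periodic \<open>d \<ge> 2\<close> \<open>0 < p\<close>])
  moreover have "d_automatic d (\<lambda>s. \<tau> (morph_limit \<sigma> d p c s))"
    using d_automatic_morph_limit[OF finB \<sigma>B \<open>c \<in> B\<close> periodic \<open>d \<ge> 2\<close> \<open>0 < p\<close>] .
  ultimately show False
    using assms(7) by blast
qed

end
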